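(* Let $\mathcal{C}=\{\mathcal{N}_1,\dots,\mathcal{N}_k\}$ be a clustering of a finite set of elements into $k$ (possibly overlapping) clusters, every element belonging to at least one cluster. If $\mathcal{N}_i\setminus\bigcup_{j\neq i}\mathcal{N}_j\neq\emptyset$ for all $i\in[k]$, then $\mathcal{C}$ is the only valid clustering (up to relabeling) that is consistent with the entire query matrix.
   Context: The query matrix has $(i,j)$ entry $1$ if elements $i,j$ belong to a common cluster and $0$ otherwise. A valid clustering consistent with the query matrix is a clustering into $k$ clusters whose query matrix coincides with the given one. *)

theory Defs
  imports Main
begin

definition valid_clustering :: "'a set \<Rightarrow> nat \<Rightarrow> (nat \<Rightarrow> 'a set) \<Rightarrow> bool" where
  "valid_clustering V k N \<longleftrightarrow> (\<forall>i<k. N i \<subseteq> V) \<and> (\<Union>i<k. N i) = V"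

definition query_matrix :: "nat \<Rightarrow> (nat \<Rightarrow> 'a set) \<Rightarrow> 'a \<Rightarrow> 'a \<Rightarrow> nat" where
  "query_matrix k N x y = (if \<exists>i<k. x \<in> N i \<and> y \<in> N i then 1 else 0)"

end

theory Submission
  imports Defs
begin

text \<open>Each cluster \<open>N i\<close> contains a private element \<open>u i\<close>, and then \<open>N i\<close> is exactly the set of
  elements sharing a cluster with \<open>u i\<close>, which the query matrix records. In a second clustering \<open>N'\<close>
  with the same query matrix, two distinct private elements never share a cluster, so sending \<open>i\<close> to a
  cluster of \<open>N'\<close> containing \<open>u i\<close> is injective, hence a permutation of the \<open>k\<close> labels. Consequently
  \<open>u i\<close> is private in \<open>N'\<close> as well, and its cluster there is again its set of co-members, i.e. \<open>N i\<close>.\<close>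

definition comember :: "nat \<Rightarrow> (nat \<Rightarrow> 'a set) \<Rightarrow> 'a \<Rightarrow> 'a \<Rightarrow> bool" where
  "comember k N x y \<longleftrightarrow> (\<exists>i<k. x \<in> N i \<and> y \<in> N i)"

definition private_member :: "nat \<Rightarrow> (nat \<Rightarrow> 'a set) \<Rightarrow> nat \<Rightarrow> 'a \<Rightarrow> bool" where
  "private_member k N i u \<longleftrightarrow> u \<in> N i \<and> (\<forall>j<k. j \<noteq> i \<longrightarrow> u \<notin> N j)"

lemma query_matrix_eq_iff_comember:
  "query_matrix k N' x y = query_matrix k N x y \<longleftrightarrow> (comember k N' x y \<longleftrightarrow> comember k N x y)"
  unfolding query_matrix_def comember_def by auto

lemma private_member_iff:
  "private_member k N i u \<longleftrightarrow> u \<in> N i - (\<Union>j\<in>{..<k} - {i}. N j)"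
  by (auto simp: private_member_def)

lemma private_members_not_comember:
  assumes "private_member k N i u" "private_member k N j v" "i < k" "j < k" "i \<noteq> j"
  shows "\<not> comember k N u v"
  using assms by (auto simp: private_member_def comember_def)

lemma cluster_eq_comembers_of_private_member:
  assumes "private_member k N i u" "i < k" "N i \<subseteq> V"
  shows "N i = {x \<in> V. comember k N x u}"
  using assms by (auto simp: private_member_def comember_def)

lemma clusters_matched_by_private_members:
  assumes N: "valid_clustering V k N" and N': "valid_clustering V k N'"
    and same_comember: "\<And>x y. x \<in> V \<Longrightarrow> y \<in> V \<Longrightarrow> comember k N' x y \<longleftrightarrow> comember k N x y"
    and u: "\<And>i. i < k \<Longrightarrow> private_member k N i (u i)"
  shows "\<exists>c. bij_betw c {..<k} {..<k} \<and> (\<forall>i<k. N' (c i) = N i)"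
proof -
  have uV: "u i \<in> V" if "i < k" for i
    using u[OF that] N that by (auto simp: valid_clustering_def private_member_def)
  have "\<forall>i<k. \<exists>m<k. u i \<in> N' m"
    using uV N' by (auto simp: valid_clustering_def)
  then obtain c where c: "\<And>i. i < k \<Longrightarrow> c i < k \<and> u i \<in> N' (c i)"
    by metis
  have separated: "i = j" if "i < k" "j < k" "m < k" "u i \<in> N' m" "u j \<in> N' m" for i j m
  proof (rule ccontr)
    assume "i \<noteq> j"
    then have "\<not> comember k N (u i) (u j)"
      using private_members_not_comember[OF u u] that by blast
    moreover have "comember k N' (u i) (u j)"
      using that by (auto simp: comember_def)
    ultimately show False
      using same_comember[of "u i" "u j"] uV that by blast
  qed
  have "inj_on c {..<k}"
    by (rule inj_onI) (metis c separated lessThan_iff)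
  moreover have "c ` {..<k} \<subseteq> {..<k}"
    using c by auto
  ultimately have bij: "bij_betw c {..<k} {..<k}"
    by (simp add: bij_betw_def endo_inj_surj)
  have private': "private_member k N' (c i) (u i)" if "i < k" for i
  proof -
    have "m = c i" if "m < k" "u i \<in> N' m" for m
    proof -
      have "m \<in> c ` {..<k}"
        using bij_betw_imp_surj_on[OF bij] \<open>m < k\<close> by simp
      then obtain j where j: "j < k" "m = c j"
        by blast
      then have "i = j"
        using separated[of i j m] c[of j] \<open>i < k\<close> that by simp
      with j show ?thesis
        by simp
    qed
    then show ?thesis
      using c that by (auto simp: private_member_def)
  qed
  have "N' (c i) = N i" if "i < k" for i
  proof -
    have "N' (c i) = {x \<in> V. comember k N' x (u i)}"
      using N' c[OF that] by (intro cluster_eq_comembers_of_private_member[OF private'[OF that]])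
        (auto simp: valid_clustering_def)
    also have "\<dots> = {x \<in> V. comember k N x (u i)}"
      using same_comember uV[OF that] by blast
    also have "\<dots> = N i"
      using N that by (intro cluster_eq_comembers_of_private_member[OF u[OF that], symmetric])
        (auto simp: valid_clustering_def)
    finally show ?thesis .
  qed
  with bij show ?thesis
    by blast
qed

theorem theorem11:
  fixes V :: "'a set" and k :: nat and N :: "nat \<Rightarrow> 'a set"
  assumes "finite V"
    and "valid_clustering V k N"
    and "\<forall>i<k. N i - (\<Union>j\<in>{..<k} - {i}. N j) \<noteq> {}"
  shows "\<forall>N'. valid_clustering V k N' \<and>
           (\<forall>x\<in>V. \<forall>y\<in>V. query_matrix k N' x y = query_matrix k N x y)
         \<longrightarrow> (\<exists>\<sigma>. bij_betw \<sigma> {..<k} {..<k} \<and> (\<forall>i<k. N' i = N (\<sigma> i)))"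
proof (intro allI impI)
  fix N'
  assume "valid_clustering V k N' \<and>
    (\<forall>x\<in>V. \<forall>y\<in>V. query_matrix k N' x y = query_matrix k N x y)"
  then have N': "valid_clustering V k N'"
    and same_comember: "\<And>x y. x \<in> V \<Longrightarrow> y \<in> V \<Longrightarrow> comember k N' x y \<longleftrightarrow> comember k N x y"
    by (auto simp: query_matrix_eq_iff_comember)
  have "\<forall>i<k. \<exists>v. private_member k N i v"
    using assms(3) unfolding private_member_iff ex_in_conv .
  then obtain u where "\<And>i. i < k \<Longrightarrow> private_member k N i (u i)"
    by metis
  then obtain c where c: "bij_betw c {..<k} {..<k}" "\<And>i. i < k \<Longrightarrow> N' (c i) = N i"
    using clusters_matched_by_private_members[OF assms(2) N' same_comember] by blast
  define \<sigma> where "\<sigma> = inv_into {..<k} c"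
  have \<sigma>: "bij_betw \<sigma> {..<k} {..<k}"
    unfolding \<sigma>_def using c(1) by (rule bij_betw_inv_into)
  have "N' i = N (\<sigma> i)" if "i < k" for i
  proof -
    have "c (\<sigma> i) = i"
      unfolding \<sigma>_def using bij_betw_inv_into_right[OF c(1)] that by simp
    moreover have "\<sigma> i < k"
      using bij_betw_apply[OF \<sigma>] that by simp
    ultimately show ?thesis
      using c(2) by metis
  qed
  with \<sigma> show "\<exists>\<sigma>. bij_betw \<sigma> {..<k} {..<k} \<and> (\<forall>i<k. N' i = N (\<sigma> i))"
    by blast
qed

end
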